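(* Let $H_0,H_1$ be complex Hilbert spaces, $G$ a densely defined closed operator from $H_0$ into $H_1$ and $D$ a densely defined closed operator from $H_1$ into $H_0$ with $-G^*\subset D$. Let $m\in\mathcal L(H_0)$ (not necessarily coercive) and let $a\in\mathcal L(H_1)$ be coercive. Let $\mathring T\in\mathcal L(\mathrm{dom}(\mathring G))$ be defined by $(\mathring Tu,v)_{\mathrm{dom}(\mathring G)}=(aGu,Gv)_{H_1}+(mu,v)_{H_0}$ for all $u,v\in\mathrm{dom}(\mathring G)$, and suppose $\mathrm{ran}(\mathring T)$ is closed in $\mathrm{dom}(\mathring G)$. Then the Dirichlet-to-Neumann graph $\Lambda$ associated with $-DaG+m$ satisfies \[ \mathrm{dom}(\Lambda)=\{u_0\in\mathrm{BD}(G):(Gu_0,\pi_{\mathrm{BD}(D)}a^*Gv)_{\mathrm{BD}(D)}=0\text{ for all }v\in\ker(m^*-Da^*\mathring G)\}. \]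
   Context: $\mathring D=-G^*$, $\mathring G=-D^*$ (so $\mathring G\subset G$). Domains carry graph inner products, e.g. $(u,v)_{\mathrm{dom}(\mathring G)}=(u,v)_{H_0}+(\mathring Gu,\mathring Gv)_{H_1}$. $\mathrm{BD}(G)$ (resp. $\mathrm{BD}(D)$) is the orthogonal complement of $\mathrm{dom}(\mathring G)$ in $\mathrm{dom}(G)$ (resp. of $\mathrm{dom}(\mathring D)$ in $\mathrm{dom}(D)$) with induced inner products; $\pi_{\mathrm{BD}(G)},\pi_{\mathrm{BD}(D)}$ are the orthogonal projections. Coercive: $\mathrm{Re}(ax,x)\ge\mu\|x\|^2$ for some $\mu>0$. The Dirichlet-to-Neumann graph is $\Lambda=\{(\pi_{\mathrm{BD}(G)}u,\pi_{\mathrm{BD}(D)}aGu): u\in\mathrm{dom}(G),\ aGu\in\mathrm{dom}(D),\ mu-DaGu=0\}$ and $\mathrm{dom}(\Lambda)$ is the set of first components. $\ker(m^*-Da^*\mathring G)=\{v\in\mathrm{dom}(\mathring G):a^*\mathring Gv\in\mathrm{dom}(D),\ m^*v=Da^*\mathring Gv\}$. *)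

theory Defs
  imports Complex_Main
begin

text \<open>Inner product is linear in the first argument, conjugate-linear in the second.\<close>

class cinner_space = ab_group_add +
  fixes scaleC :: "complex \<Rightarrow> 'a \<Rightarrow> 'a"
    and cinner :: "'a \<Rightarrow> 'a \<Rightarrow> complex"
  assumes scaleC_add_right: "scaleC c (x + y) = scaleC c x + scaleC c y"
    and scaleC_add_left: "scaleC (c + d) x = scaleC c x + scaleC d x"
    and scaleC_scaleC: "scaleC c (scaleC d x) = scaleC (c * d) x"
    and scaleC_one: "scaleC 1 x = x"
    and cinner_add_left: "cinner (x + y) z = cinner x z + cinner y z"
    and cinner_scaleC_left: "cinner (scaleC c x) y = c * cinner x y"
    and cinner_commute: "cinner y x = cnj (cinner x y)"
    and cinner_nonneg: "0 \<le> Re (cinner x x)"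
    and cinner_eq_zero: "cinner x x = 0 \<Longrightarrow> x = 0"

definition cnorm :: "'a::cinner_space \<Rightarrow> real" where
  "cnorm x = sqrt (Re (cinner x x))"

class chilbert = cinner_space +
  assumes complete: "\<And>X :: nat \<Rightarrow> 'a.
    (\<forall>e>0. \<exists>N::nat. \<forall>m\<ge>N. \<forall>n\<ge>N. sqrt (Re (cinner (X m - X n) (X m - X n))) < e)
      \<Longrightarrow> \<exists>L. \<forall>e>0. \<exists>N::nat. \<forall>n\<ge>N. sqrt (Re (cinner (X n - L) (X n - L))) < e"

definition csubspace :: "'a::cinner_space set \<Rightarrow> bool" where
  "csubspace S \<longleftrightarrow> 0 \<in> S \<and> (\<forall>x\<in>S. \<forall>y\<in>S. x + y \<in> S) \<and> (\<forall>c. \<forall>x\<in>S. scaleC c x \<in> S)"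

definition cdense :: "'a::cinner_space set \<Rightarrow> bool" where
  "cdense S \<longleftrightarrow> (\<forall>x. \<forall>e>0. \<exists>y\<in>S. cnorm (x - y) < e)"

definition ctendsto :: "(nat \<Rightarrow> 'a::cinner_space) \<Rightarrow> 'a \<Rightarrow> bool" where
  "ctendsto X x \<longleftrightarrow> (\<forall>e>0. \<exists>N. \<forall>n\<ge>N. cnorm (X n - x) < e)"

text \<open>A (possibly unbounded) linear operator is a single-valued linear subspace of the product.\<close>
definition lin_op :: "('a::cinner_space \<times> 'b::cinner_space) set \<Rightarrow> bool" where
  "lin_op T \<longleftrightarrow> (0, 0) \<in> T
     \<and> (\<forall>x y x' y'. (x, y) \<in> T \<longrightarrow> (x', y') \<in> T \<longrightarrow> (x + x', y + y') \<in> T)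
     \<and> (\<forall>c x y. (x, y) \<in> T \<longrightarrow> (scaleC c x, scaleC c y) \<in> T)
     \<and> (\<forall>x y y'. (x, y) \<in> T \<longrightarrow> (x, y') \<in> T \<longrightarrow> y = y')"

definition closed_op :: "('a::cinner_space \<times> 'b::cinner_space) set \<Rightarrow> bool" where
  "closed_op T \<longleftrightarrow> (\<forall>X Y x y. (\<forall>n. (X n, Y n) \<in> T) \<longrightarrow> ctendsto X x \<longrightarrow> ctendsto Y y
       \<longrightarrow> (x, y) \<in> T)"

definition densely_defined_closed :: "('a::cinner_space \<times> 'b::cinner_space) set \<Rightarrow> bool" where
  "densely_defined_closed T \<longleftrightarrow> lin_op T \<and> closed_op T \<and> cdense (Domain T)"

definition app :: "('a \<times> 'b) set \<Rightarrow> 'a \<Rightarrow> 'b" where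
  "app T x = (THE y. (x, y) \<in> T)"

definition cadj :: "('a::cinner_space \<times> 'b::cinner_space) set \<Rightarrow> ('b \<times> 'a) set" where
  "cadj T = {(y, z). \<forall>(x, w)\<in>T. cinner w y = cinner x z}"

definition neg_op :: "('a \<times> 'b::ab_group_add) set \<Rightarrow> ('a \<times> 'b) set" where
  "neg_op T = {(x, - y) | x y. (x, y) \<in> T}"

definition cbounded_linear :: "('a::cinner_space \<Rightarrow> 'b::cinner_space) \<Rightarrow> bool" where
  "cbounded_linear f \<longleftrightarrow> (\<forall>x y. f (x + y) = f x + f y) \<and> (\<forall>c x. f (scaleC c x) = scaleC c (f x))
     \<and> (\<exists>K. \<forall>x. cnorm (f x) \<le> K * cnorm x)"

definition fun_adj :: "('a::cinner_space \<Rightarrow> 'b::cinner_space) \<Rightarrow> 'b \<Rightarrow> 'a" where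
  "fun_adj f = (\<lambda>y. THE z. \<forall>x. cinner (f x) y = cinner x z)"

definition coercive :: "('a::cinner_space \<Rightarrow> 'a) \<Rightarrow> bool" where
  "coercive f \<longleftrightarrow> (\<exists>\<mu>>0. \<forall>x. Re (cinner (f x) x) \<ge> \<mu> * (cnorm x)^2)"

definition gip :: "('a::cinner_space \<times> 'b::cinner_space) set \<Rightarrow> 'a \<Rightarrow> 'a \<Rightarrow> complex" where
  "gip T u v = cinner u v + cinner (app T u) (app T v)"

definition gnorm :: "('a::cinner_space \<times> 'b::cinner_space) set \<Rightarrow> 'a \<Rightarrow> real" where
  "gnorm T u = sqrt (Re (gip T u u))"

definition Gring :: "('b::cinner_space \<times> 'a::cinner_space) set \<Rightarrow> ('a \<times> 'b) set" where
  "Gring D = neg_op (cadj D)"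

definition Dring :: "('a::cinner_space \<times> 'b::cinner_space) set \<Rightarrow> ('b \<times> 'a) set" where
  "Dring G = neg_op (cadj G)"

definition BD :: "('a::cinner_space \<times> 'b::cinner_space) set \<Rightarrow> ('a \<times> 'b) set \<Rightarrow> 'a set" where
  "BD T T0 = {u \<in> Domain T. \<forall>v \<in> Domain T0. gip T u v = 0}"

definition orth_proj :: "('a::ab_group_add \<Rightarrow> 'a \<Rightarrow> complex) \<Rightarrow> 'a set \<Rightarrow> 'a \<Rightarrow> 'a" where
  "orth_proj ip M u = (THE w. w \<in> M \<and> (\<forall>z\<in>M. ip (u - w) z = 0))"

definition piBD_G :: "('a::cinner_space \<times> 'b::cinner_space) set \<Rightarrow> ('b \<times> 'a) set \<Rightarrow> 'a \<Rightarrow> 'a" where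
  "piBD_G G D = orth_proj (gip G) (BD G (Gring D))"

definition piBD_D :: "('a::cinner_space \<times> 'b::cinner_space) set \<Rightarrow> ('b \<times> 'a) set \<Rightarrow> 'b \<Rightarrow> 'b" where
  "piBD_D G D = orth_proj (gip D) (BD D (Dring G))"

definition DtN :: "('a::cinner_space \<times> 'b::cinner_space) set \<Rightarrow> ('b \<times> 'a) set
    \<Rightarrow> ('b \<Rightarrow> 'b) \<Rightarrow> ('a \<Rightarrow> 'a) \<Rightarrow> ('a \<times> 'b) set" where
  "DtN G D a m = {(piBD_G G D u, piBD_D G D (a (app G u))) | u.
      u \<in> Domain G \<and> a (app G u) \<in> Domain D \<and> m u - app D (a (app G u)) = 0}"

definition ker_mDaG :: "('a::cinner_space \<times> 'b::cinner_space) set \<Rightarrow> ('b \<times> 'a) set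
    \<Rightarrow> ('b \<Rightarrow> 'b) \<Rightarrow> ('a \<Rightarrow> 'a) \<Rightarrow> 'a set" where
  "ker_mDaG G D a m = {v \<in> Domain (Gring D).
      fun_adj a (app (Gring D) v) \<in> Domain D
      \<and> fun_adj m v = app D (fun_adj a (app (Gring D) v))}"

definition closed_in_dom :: "('a::cinner_space \<times> 'b::cinner_space) set \<Rightarrow> 'a set \<Rightarrow> bool" where
  "closed_in_dom T S \<longleftrightarrow> (\<forall>X y. (\<forall>n. X n \<in> S) \<longrightarrow> y \<in> Domain T
     \<longrightarrow> (\<forall>e>0. \<exists>N::nat. \<forall>n\<ge>N. gnorm T (X n - y) < e) \<longrightarrow> y \<in> S)"

end

theory Submission
  imports Defs "HOL-Library.Product_Plus"
begin

text \<open>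
  Write \<open>b(u,v) = (aGu,Gv) + (mu,v)\<close> and \<open>G0 = -D\<^sup>*\<close>. Green's formula shows that
  \<open>u \<in> dom(G)\<close> solves \<open>mu = DaGu\<close> iff \<open>b(u,\<cdot>)\<close> vanishes on \<open>dom(G0)\<close>, and that
  \<open>ker(m\<^sup>* - Da\<^sup>*G0)\<close> is the set of \<open>v \<in> dom(G0)\<close> with \<open>b(\<cdot>,v) = 0\<close> on \<open>dom(G0)\<close>.
  For \<open>u\<^sub>0 \<in> BD(G)\<close> one has \<open>DGu\<^sub>0 = u\<^sub>0\<close> and \<open>Gu\<^sub>0 \<in> BD(D)\<close>, which turns the pairing in the
  statement into \<open>b(u\<^sub>0,v)\<close>. As \<open>u\<^sub>0\<close> is the \<open>BD(G)\<close>-component of \<open>u\<close> exactly when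
  \<open>u - u\<^sub>0 \<in> dom(G0)\<close>, \<open>u\<^sub>0 \<in> dom(\<Lambda>)\<close> iff \<open>b(u\<^sub>0,\<cdot>) = b(w,\<cdot>) = (Tw,\<cdot>)\<close> on \<open>dom(G0)\<close> for
  some \<open>w \<in> dom(G0)\<close>, i.e. iff the representative of \<open>b(u\<^sub>0,\<cdot>)\<close> in \<open>dom(G0)\<close> lies in
  \<open>ran(T)\<close>. Being closed, \<open>ran(T)\<close> is the orthogonal complement of
  \<open>ran(T)\<^sup>\<bottom> = ker(m\<^sup>* - Da\<^sup>*G0)\<close>, on which \<open>b(u\<^sub>0,\<cdot>)\<close> vanishes by the
  hypothesis on \<open>u\<^sub>0\<close>.
\<close>

section \<open>Complex inner product spaces\<close>

lemma cinner_zero_left [simp]: "cinner (0::'a::cinner_space) y = 0"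
  using cinner_add_left[of 0 0 y] by simp

lemma cinner_minus_left: "cinner (- x) y = - cinner x y"
  using cinner_add_left[of x "-x" y] by simp (metis add.commute eq_neg_iff_add_eq_0)

lemma cinner_diff_left: "cinner (x - y) z = cinner x z - cinner y z"
  using cinner_add_left[of x "-y" z] cinner_minus_left[of y z] by simp

lemma cinner_add_right: "cinner x (y + z) = cinner x y + cinner x z"
  by (metis cinner_commute cinner_add_left complex_cnj_add)

lemma cinner_zero_right [simp]: "cinner x 0 = 0"
  by (metis cinner_commute cinner_zero_left complex_cnj_zero)

lemma cinner_minus_right: "cinner x (- y) = - cinner x y"
  by (metis cinner_commute cinner_minus_left complex_cnj_minus)

lemma cinner_diff_right: "cinner x (y - z) = cinner x y - cinner x z"
  by (metis cinner_commute cinner_diff_left complex_cnj_diff)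

lemma cinner_scaleC_right: "cinner x (scaleC c y) = cnj c * cinner x y"
  by (metis cinner_commute cinner_scaleC_left complex_cnj_mult)

lemma cinner_eq_zero_commute: "cinner x y = 0 \<longleftrightarrow> cinner y x = 0"
  by (metis cinner_commute complex_cnj_zero_iff)

lemma scaleC_zero_left [simp]: "scaleC 0 (x::'a::cinner_space) = 0"
  using scaleC_add_left[of 0 0 x] by simp

lemma scaleC_zero_right [simp]: "scaleC c (0::'a::cinner_space) = 0"
  using scaleC_add_right[of c 0 0] by simp

lemma scaleC_minus_left: "scaleC (- c) x = - scaleC c x"
  using scaleC_add_left[of c "-c" x] by simp (metis add.commute eq_neg_iff_add_eq_0)

lemma scaleC_minus_one: "scaleC (-1) x = - x"
  using scaleC_minus_left[of 1 x] scaleC_one by simp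

lemma scaleC_diff_right: "scaleC c (x - y) = scaleC c x - scaleC c y"
  using scaleC_add_right[of c "x - y" y] by (simp add: eq_diff_eq)

lemma scaleC_minus_right: "scaleC c (- x) = - scaleC c x"
  using scaleC_diff_right[of c 0 x] by simp

lemma scaleC_two: "scaleC 2 (y::'a::cinner_space) = y + y"
  using scaleC_add_left[of 1 1 y] by (simp add: scaleC_one)

lemma cinner_self_real: "cinner x x = complex_of_real (Re (cinner x x))"
proof -
  have "Im (cinner x x) = 0"
    using cinner_commute[of x x] by (metis cnj.sel(2) complex_eq_iff equation_minus_iff
        neg_equal_zero zero_complex.sel(2))
  then show ?thesis by (simp add: complex_eq_iff)
qed

lemma cinner_self_eq_zero_iff: "cinner x x = 0 \<longleftrightarrow> x = 0"
  using cinner_eq_zero by auto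

lemma Re_cinner_self_eq_zero: "Re (cinner x x) = 0 \<Longrightarrow> x = 0"
  by (metis cinner_eq_zero cinner_self_real of_real_0)

lemma cnorm_power2: "(cnorm x)\<^sup>2 = Re (cinner x x)"
  unfolding cnorm_def by (simp add: cinner_nonneg)

lemma cnorm_nonneg: "cnorm x \<ge> 0"
  unfolding cnorm_def by (simp add: cinner_nonneg)

lemma cnorm_minus: "cnorm (- x) = cnorm (x::'a::cinner_space)"
  unfolding cnorm_def by (simp add: cinner_minus_left cinner_minus_right)

lemma cnorm_minus_commute: "cnorm (x - y) = cnorm (y - x)"
  using cnorm_minus[of "y - x"] by simp

lemma cmod_cinner_power2: "(cmod (cinner x y))\<^sup>2 = Re (cinner x y * cinner y x)"
  by (metis cinner_commute Re_complex_of_real complex_mult_cnj complex_mod_mult_cnj cmod_power2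
      mult.commute)

lemma Cauchy_Schwarz_cinner: "cmod (cinner x y) \<le> cnorm x * cnorm y"
proof (cases "y = 0")
  case True
  then show ?thesis by (simp add: cnorm_def)
next
  case False
  define r where "r = Re (cinner y y)"
  have r: "cinner y y = complex_of_real r"
    unfolding r_def by (rule cinner_self_real)
  have r_pos: "r > 0"
    using False cinner_nonneg[of y] Re_cinner_self_eq_zero[of y] r_def by fastforce
  define t where "t = cinner x y / complex_of_real r"
  have "0 \<le> Re (cinner (x - scaleC t y) (x - scaleC t y))" by (rule cinner_nonneg)
  also have "cinner (x - scaleC t y) (x - scaleC t y)
      = cinner x x - cnj t * cinner x y - t * cinner y x + t * cnj t * cinner y y"
    by (simp add: cinner_diff_left cinner_diff_right cinner_scaleC_left cinner_scaleC_right
        algebra_simps)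
  also have "\<dots> = cinner x x - cinner x y * cinner y x / complex_of_real r"
    using r_pos unfolding t_def r by (simp add: cinner_commute[of x y] field_simps complex_eq_iff)
  finally have "Re (cinner x y * cinner y x) \<le> Re (cinner x x) * r"
    using r_pos by (simp add: field_simps)
  then have "(cmod (cinner x y))\<^sup>2 \<le> (cnorm x * cnorm y)\<^sup>2"
    by (simp add: cmod_cinner_power2 cnorm_power2 r_def power_mult_distrib)
  then show ?thesis
    using cnorm_nonneg by (meson mult_nonneg_nonneg power2_le_imp_le)
qed

lemma cnorm_triangle: "cnorm (x + y) \<le> cnorm x + cnorm (y::'a::cinner_space)"
proof -
  have "Re (cinner (x + y) (x + y))
      = Re (cinner x x) + Re (cinner x y) + Re (cinner y x) + Re (cinner y y)"
    by (simp add: cinner_add_left cinner_add_right)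
  also have "\<dots> \<le> (cnorm x)\<^sup>2 + cnorm x * cnorm y + cnorm y * cnorm x + (cnorm y)\<^sup>2"
    using Cauchy_Schwarz_cinner[of x y] Cauchy_Schwarz_cinner[of y x]
      complex_Re_le_cmod[of "cinner x y"] complex_Re_le_cmod[of "cinner y x"]
    by (simp add: cnorm_power2) (smt (verit) mult.commute)
  also have "\<dots> = (cnorm x + cnorm y)\<^sup>2" by (simp add: power2_eq_square algebra_simps)
  finally have "(cnorm (x + y))\<^sup>2 \<le> (cnorm x + cnorm y)\<^sup>2" by (simp add: cnorm_power2)
  then show ?thesis
    using cnorm_nonneg[of x] cnorm_nonneg[of y] by (meson add_nonneg_nonneg power2_le_imp_le)
qed

lemma cnorm_triangle_diff: "cnorm (x - z) \<le> cnorm (x - y) + cnorm (y - (z::'a::cinner_space))"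
  using cnorm_triangle[of "x - y" "y - z"] by simp

lemma cnorm_scaleC: "cnorm (scaleC c x) = cmod c * cnorm (x::'a::cinner_space)"
proof -
  have "cinner (scaleC c x) (scaleC c x) = (c * cnj c) * cinner x x"
    by (simp add: cinner_scaleC_left cinner_scaleC_right)
  also have "\<dots> = complex_of_real ((cmod c)\<^sup>2 * Re (cinner x x))"
    using complex_norm_square[of c] by (subst cinner_self_real) (simp add: of_real_power)
  finally show ?thesis unfolding cnorm_def by (simp add: real_sqrt_mult)
qed

lemma parallelogram_law:
  "Re (cinner (x + y) (x + y)) + Re (cinner (x - y) (x - y))
    = 2 * Re (cinner x x) + 2 * Re (cinner (y::'a::cinner_space) y)"
  by (simp add: cinner_add_left cinner_add_right cinner_diff_left cinner_diff_right)

lemma eq_zero_if_cmod_le_eps: "(\<And>e. e > 0 \<Longrightarrow> cmod z \<le> C * e) \<Longrightarrow> z = 0"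
proof (rule ccontr)
  assume le: "\<And>e. e > 0 \<Longrightarrow> cmod z \<le> C * e" and "z \<noteq> 0"
  then have C: "C > 0" using le[of 1] by (smt (verit) zero_less_norm_iff)
  have "cmod z \<le> C * (cmod z / (2 * C))" using le[of "cmod z / (2 * C)"] \<open>z \<noteq> 0\<close> C by simp
  then show False using \<open>z \<noteq> 0\<close> C by (simp add: field_simps)
qed

lemma cinner_ctendsto_right:
  assumes "ctendsto Y y" and "e > 0"
  shows "\<exists>N. \<forall>n\<ge>N. cmod (cinner w (Y n) - cinner w y) \<le> cnorm w * e"
proof -
  obtain N where N: "\<forall>n\<ge>N. cnorm (Y n - y) < e"
    using assms unfolding ctendsto_def by blast
  have "cmod (cinner w (Y n) - cinner w y) \<le> cnorm w * e" if "N \<le> n" for n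
  proof -
    have "cmod (cinner w (Y n) - cinner w y) \<le> cnorm w * cnorm (Y n - y)"
      using Cauchy_Schwarz_cinner[of w "Y n - y"] by (simp add: cinner_diff_right)
    also have "\<dots> \<le> cnorm w * e"
      using N that by (intro mult_left_mono cnorm_nonneg) (simp add: less_imp_le)
    finally show ?thesis .
  qed
  then show ?thesis by blast
qed

lemma dense_orthogonal_eq_zero:
  assumes "cdense S" and "\<forall>x\<in>S. cinner x v = 0"
  shows "v = 0"
proof -
  have "cinner v v = 0"
  proof (rule eq_zero_if_cmod_le_eps[where C = "cnorm v"])
    fix e :: real
    assume "e > 0"
    then obtain x where x: "x \<in> S" "cnorm (v - x) < e"
      using assms(1) unfolding cdense_def by blast
    have "cmod (cinner v v) = cmod (cinner (v - x) v)"
      using assms(2) x by (simp add: cinner_diff_left)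
    also have "\<dots> \<le> cnorm (v - x) * cnorm v" by (rule Cauchy_Schwarz_cinner)
    also have "\<dots> \<le> e * cnorm v"
      using x by (intro mult_right_mono) (simp_all add: less_imp_le cnorm_nonneg)
    finally show "cmod (cinner v v) \<le> cnorm v * e" by (simp add: mult.commute)
  qed
  then show ?thesis by (simp add: cinner_self_eq_zero_iff)
qed

instantiation prod :: (cinner_space, cinner_space) cinner_space
begin

definition scaleC_prod_def: "scaleC c p = (scaleC c (fst p), scaleC c (snd p))"

definition cinner_prod_def: "cinner p q = cinner (fst p) (fst q) + cinner (snd p) (snd q)"

instance
proof
  fix c d :: complex and x y z :: "'a \<times> 'b"
  show "scaleC c (x + y) = scaleC c x + scaleC c y"
    by (simp add: scaleC_prod_def scaleC_add_right)
  show "scaleC (c + d) x = scaleC c x + scaleC d x"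
    by (simp add: scaleC_prod_def scaleC_add_left)
  show "scaleC c (scaleC d x) = scaleC (c * d) x"
    by (simp add: scaleC_prod_def scaleC_scaleC)
  show "scaleC 1 x = x"
    by (simp add: scaleC_prod_def scaleC_one)
  show "cinner (x + y) z = cinner x z + cinner y z"
    by (simp add: cinner_prod_def cinner_add_left)
  show "cinner (scaleC c x) y = c * cinner x y"
    by (simp add: cinner_prod_def scaleC_prod_def cinner_scaleC_left algebra_simps)
  show "cinner y x = cnj (cinner x y)"
    by (simp add: cinner_prod_def) (metis cinner_commute)
  show "0 \<le> Re (cinner x x)"
    by (simp add: cinner_prod_def cinner_nonneg add_nonneg_nonneg)
  assume "cinner x x = 0"
  then have "Re (cinner x x) = 0" by simp
  then have "Re (cinner (fst x) (fst x)) + Re (cinner (snd x) (snd x)) = 0"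
    by (simp add: cinner_prod_def)
  then have "Re (cinner (fst x) (fst x)) = 0" "Re (cinner (snd x) (snd x)) = 0"
    using cinner_nonneg[of "fst x"] cinner_nonneg[of "snd x"] by linarith+
  then show "x = 0" using Re_cinner_self_eq_zero by (metis prod.collapse zero_prod_def)
qed

end

lemma cinner_Pair [simp]: "cinner (x, y) (x', y') = cinner x x' + cinner y y'"
  by (simp add: cinner_prod_def)

lemma scaleC_Pair [simp]: "scaleC c (x, y) = (scaleC c x, scaleC c y)"
  by (simp add: scaleC_prod_def)

lemma cnorm_fst_le: "cnorm (fst p) \<le> cnorm (p::'a::cinner_space \<times> 'b::cinner_space)"
  unfolding cnorm_def cinner_prod_def using cinner_nonneg[of "snd p"] by simp

lemma cnorm_snd_le: "cnorm (snd p) \<le> cnorm (p::'a::cinner_space \<times> 'b::cinner_space)"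
  unfolding cnorm_def cinner_prod_def using cinner_nonneg[of "fst p"] by simp

lemma cnorm_le_fst_snd: "cnorm (p::'a::cinner_space \<times> 'b::cinner_space) \<le> cnorm (fst p) + cnorm (snd p)"
  unfolding cnorm_def cinner_prod_def
  using sqrt_add_le_add_sqrt[OF cinner_nonneg cinner_nonneg] by simp

lemma ctendsto_fst: "ctendsto X x \<Longrightarrow> ctendsto (\<lambda>n. fst (X n)) (fst x)"
  unfolding ctendsto_def by (metis (no_types, lifting) cnorm_fst_le fst_diff order_le_less_trans)

lemma ctendsto_snd: "ctendsto X x \<Longrightarrow> ctendsto (\<lambda>n. snd (X n)) (snd x)"
  unfolding ctendsto_def by (metis (no_types, lifting) cnorm_snd_le snd_diff order_le_less_trans)

lemma ctendsto_Pair: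
  assumes "ctendsto X x" and "ctendsto Y y"
  shows "ctendsto (\<lambda>n. (X n, Y n)) (x, y)"
  unfolding ctendsto_def
proof (intro allI impI)
  fix e :: real
  assume "e > 0"
  then obtain N1 N2 where N: "\<forall>n\<ge>N1. cnorm (X n - x) < e/2" "\<forall>n\<ge>N2. cnorm (Y n - y) < e/2"
    using assms unfolding ctendsto_def by (meson half_gt_zero)
  then have "cnorm ((X n, Y n) - (x, y)) < e" if "max N1 N2 \<le> n" for n
  proof -
    have "cnorm (X n - x) < e/2" "cnorm (Y n - y) < e/2"
      using N that by auto
    then show ?thesis using cnorm_le_fst_snd[of "(X n - x, Y n - y)"] by simp
  qed
  then show "\<exists>N. \<forall>n\<ge>N. cnorm ((X n, Y n) - (x, y)) < e" by blast
qed

definition ccauchy :: "(nat \<Rightarrow> 'a::cinner_space) \<Rightarrow> bool" where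
  "ccauchy X \<longleftrightarrow> (\<forall>e>0. \<exists>N. \<forall>m\<ge>N. \<forall>n\<ge>N. cnorm (X m - X n) < e)"

lemma ccauchy_le:
  assumes "ccauchy X" and "\<And>m n. cnorm (Y m - Y n) \<le> cnorm (X m - X n)"
  shows "ccauchy Y"
  using assms unfolding ccauchy_def by (meson le_less_trans)

lemma ccauchy_convergent: "ccauchy (X::nat \<Rightarrow> 'a::chilbert) \<Longrightarrow> \<exists>L. ctendsto X L"
  using complete[of X] unfolding ccauchy_def ctendsto_def cnorm_def by blast

instance prod :: (chilbert, chilbert) chilbert
proof
  fix X :: "nat \<Rightarrow> 'a \<times> 'b"
  assume "\<forall>e>0. \<exists>N. \<forall>m\<ge>N. \<forall>n\<ge>N. sqrt (Re (cinner (X m - X n) (X m - X n))) < e"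
  then have "ccauchy X" by (simp add: ccauchy_def cnorm_def)
  then obtain x y where "ctendsto (\<lambda>n. fst (X n)) x" "ctendsto (\<lambda>n. snd (X n)) y"
    using ccauchy_convergent ccauchy_le[of X "\<lambda>n. fst (X n)"] ccauchy_le[of X "\<lambda>n. snd (X n)"]
      cnorm_fst_le cnorm_snd_le by (metis fst_diff snd_diff)
  then have "ctendsto X (x, y)" using ctendsto_Pair by fastforce
  then show "\<exists>L. \<forall>e>0. \<exists>N. \<forall>n\<ge>N. sqrt (Re (cinner (X n - L) (X n - L))) < e"
    unfolding ctendsto_def cnorm_def by blast
qed

section \<open>Orthogonal projections and the Riesz representation\<close>

definition ccomplete :: "'a::cinner_space set \<Rightarrow> bool" where
  "ccomplete S \<longleftrightarrow> (\<forall>X. (\<forall>n. X n \<in> S) \<longrightarrow> ccauchy X \<longrightarrow> (\<exists>L\<in>S. ctendsto X L))"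

definition cclosed :: "'a::cinner_space set \<Rightarrow> bool" where
  "cclosed S \<longleftrightarrow> (\<forall>X L. (\<forall>n. X n \<in> S) \<longrightarrow> ctendsto X L \<longrightarrow> L \<in> S)"

lemma cclosed_imp_ccomplete: "cclosed (S::'a::chilbert set) \<Longrightarrow> ccomplete S"
  unfolding ccomplete_def cclosed_def using ccauchy_convergent by blast

lemma Re_cinner_diff_scaleC_self:
  fixes t :: real and y z :: "'a::cinner_space"
  defines "w \<equiv> scaleC (complex_of_real t * cinner y z) z"
  shows "Re (cinner (y - w) (y - w))
    = Re (cinner y y) - 2 * t * (cmod (cinner y z))\<^sup>2 + t\<^sup>2 * (cmod (cinner y z))\<^sup>2 * Re (cinner z z)"
proof -
  define c where "c = cinner y z"
  have zy: "cinner z y = cnj c" unfolding c_def by (rule cinner_commute)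
  have zz: "cinner z z = complex_of_real (Re (cinner z z))" by (rule cinner_self_real)
  have cc: "c * cnj c = complex_of_real ((cmod c)\<^sup>2)" by (simp only: complex_mult_cnj cmod_power2)
  have "cinner (y - w) (y - w) = cinner y y - complex_of_real t * (c * cnj c)
      - complex_of_real t * (c * cnj c) + complex_of_real (t\<^sup>2) * (c * cnj c) * cinner z z"
    unfolding w_def
    by (simp add: cinner_diff_left cinner_diff_right cinner_scaleC_left cinner_scaleC_right zy
        flip: c_def) (simp add: algebra_simps power2_eq_square)
  also have "\<dots> = cinner y y - complex_of_real (2 * t * (cmod c)\<^sup>2)
      + complex_of_real (t\<^sup>2 * (cmod c)\<^sup>2 * Re (cinner z z))"
    by (subst zz, simp only: cc of_real_mult of_real_diff, simp add: algebra_simps)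
  finally show ?thesis unfolding c_def by simp
qed

lemma nearest_point_orthogonal:
  assumes S: "csubspace S" and "p \<in> S" and "z \<in> S"
    and nearest: "\<forall>q\<in>S. cnorm (x - p) \<le> cnorm (x - q)"
  shows "cinner (x - p) z = 0"
proof (rule ccontr)
  define y c r where "y = x - p" and "c = cinner y z" and "r = Re (cinner z z)"
  assume "cinner (x - p) z \<noteq> 0"
  then have c_pos: "(cmod c)\<^sup>2 > 0" unfolding c_def y_def by simp
  have r: "r \<ge> 0" unfolding r_def by (rule cinner_nonneg)
  define t where "t = 1 / (r + 1)"
  have t: "t > 0" "t * r < 1" using r unfolding t_def by (simp_all add: field_simps)
  define w where "w = scaleC (complex_of_real t * c) z"
  have "p + w \<in> S" using S \<open>p \<in> S\<close> \<open>z \<in> S\<close> unfolding w_def csubspace_def by blast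
  moreover have "x - (p + w) = y - w" unfolding y_def by (simp add: algebra_simps)
  ultimately have "cnorm y \<le> cnorm (y - w)" using nearest unfolding y_def by metis
  then have "Re (cinner y y) \<le> Re (cinner (y - w) (y - w))" by (simp add: cnorm_def)
  also have "\<dots> = Re (cinner y y) - 2 * t * (cmod c)\<^sup>2 + t\<^sup>2 * (cmod c)\<^sup>2 * r"
    using Re_cinner_diff_scaleC_self[where t = t and y = y and z = z] unfolding w_def c_def r_def by simp
  finally have "2 * t * (cmod c)\<^sup>2 \<le> t * (t * r) * (cmod c)\<^sup>2"
    by (simp add: power2_eq_square algebra_simps)
  moreover have "t * (t * r) * (cmod c)\<^sup>2 < t * 1 * (cmod c)\<^sup>2"
    using t c_pos by (intro mult_strict_right_mono mult_strict_left_mono) auto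
  moreover have "t * (cmod c)\<^sup>2 > 0" using t c_pos by simp
  ultimately show False by simp
qed

lemma parallelogram_near_points:
  assumes S: "csubspace S" and "s \<in> S" "t \<in> S"
    and d: "0 \<le> d" "\<forall>q\<in>S. d \<le> cnorm (x - q)"
  shows "(cnorm (s - t))\<^sup>2 \<le> 2 * (cnorm (x - s))\<^sup>2 + 2 * (cnorm (x - t))\<^sup>2 - 4 * d\<^sup>2"
proof -
  define mid where "mid = scaleC (1/2) (s + t)"
  have "mid \<in> S" using S \<open>s \<in> S\<close> \<open>t \<in> S\<close> unfolding mid_def csubspace_def by blast
  have "scaleC 2 (x - mid) = (x - s) + (x - t)"
    unfolding mid_def by (simp add: scaleC_diff_right scaleC_scaleC scaleC_one scaleC_two)
  then have "cnorm ((x - s) + (x - t)) = 2 * cnorm (x - mid)"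
    by (metis cnorm_scaleC norm_numeral)
  then have "2 * d \<le> cnorm ((x - s) + (x - t))" using d \<open>mid \<in> S\<close> by simp
  then have "(2 * d)\<^sup>2 \<le> (cnorm ((x - s) + (x - t)))\<^sup>2" using d by (intro power_mono) auto
  moreover have "(cnorm (s - t))\<^sup>2 = (cnorm ((x - s) - (x - t)))\<^sup>2"
    by (simp add: cnorm_minus_commute[of s t])
  ultimately show ?thesis
    using parallelogram_law[of "x - s" "x - t"] by (simp add: cnorm_power2 power_mult_distrib)
qed

lemma divide_Suc_less:
  fixes e c :: real
  assumes "0 < e" and "c / e < real N" and "N \<le> n"
  shows "c / (real n + 1) < e"
proof -
  have "c < real N * e" using assms(1,2) by (simp add: pos_divide_less_eq)
  also have "\<dots> < (real n + 1) * e" using assms(1,3) by (intro mult_strict_right_mono) auto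
  finally show ?thesis by (simp add: divide_less_eq add_pos_nonneg mult.commute)
qed

lemma minimizing_sequence_ccauchy:
  assumes S: "csubspace S" and s: "\<And>n. s n \<in> S"
    and d: "0 \<le> d" "\<forall>q\<in>S. d \<le> cnorm (x - q)"
    and near: "\<And>n. (cnorm (x - s n))\<^sup>2 < d\<^sup>2 + 1 / (real n + 1)"
  shows "ccauchy s"
  unfolding ccauchy_def
proof (intro allI impI)
  fix e :: real
  assume "e > 0"
  obtain N :: nat where N: "4 / e\<^sup>2 < real N" using reals_Archimedean2 by blast
  have "cnorm (s m - s n) < e" if "N \<le> m" "N \<le> n" for m n
  proof -
    have "4 / (real m + 1) < e\<^sup>2" "4 / (real n + 1) < e\<^sup>2"
      using divide_Suc_less[OF _ N] that \<open>e > 0\<close> by auto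
    then have "(cnorm (s m - s n))\<^sup>2 < e\<^sup>2"
      using parallelogram_near_points[OF S s s d, of m n] near[of m] near[of n] by simp
    then show ?thesis using \<open>e > 0\<close> by (meson power2_less_imp_less less_imp_le)
  qed
  then show "\<exists>N. \<forall>m\<ge>N. \<forall>n\<ge>N. cnorm (s m - s n) < e" by blast
qed

lemma minimizing_sequence_limit:
  assumes "ctendsto s p" and "0 \<le> d"
    and near: "\<And>n. (cnorm (x - s n))\<^sup>2 < d\<^sup>2 + 1 / (real n + 1)"
  shows "cnorm (x - p) \<le> d"
proof (rule field_le_epsilon)
  fix e :: real
  assume "e > 0"
  obtain N1 where N1: "\<forall>n\<ge>N1. cnorm (s n - p) < e/2"
    using assms(1) \<open>e > 0\<close> unfolding ctendsto_def by (meson half_gt_zero)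
  obtain N2 :: nat where "4 / e\<^sup>2 < real N2" using reals_Archimedean2 by blast
  define n where "n = max N1 N2"
  have "4 / (real n + 1) < e\<^sup>2"
    using divide_Suc_less[OF _ \<open>4 / e\<^sup>2 < real N2\<close>] \<open>e > 0\<close> unfolding n_def by simp
  then have "(cnorm (x - s n))\<^sup>2 < d\<^sup>2 + (e/2)\<^sup>2"
    using near[of n] by (simp add: power_divide)
  also have "\<dots> \<le> (d + e/2)\<^sup>2"
    using \<open>0 \<le> d\<close> \<open>e > 0\<close> by (simp add: power2_sum)
  finally have "cnorm (x - s n) < d + e/2"
    using \<open>0 \<le> d\<close> \<open>e > 0\<close> by (meson power2_less_imp_less add_nonneg_nonneg less_imp_le half_gt_zero)
  moreover have "cnorm (s n - p) < e/2" using N1 unfolding n_def by simp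
  ultimately show "cnorm (x - p) \<le> d + e"
    using cnorm_triangle_diff[of x p "s n"] by simp
qed

lemma exists_nearest_point:
  assumes S: "csubspace S" and "ccomplete S"
  shows "\<exists>p\<in>S. \<forall>q\<in>S. cnorm (x - p) \<le> cnorm (x - q)"
proof -
  define d where "d = Inf ((\<lambda>s. cnorm (x - s)) ` S)"
  have ne: "(\<lambda>s. cnorm (x - s)) ` S \<noteq> {}" using S unfolding csubspace_def by auto
  have bdd: "bdd_below ((\<lambda>s. cnorm (x - s)) ` S)"
    using cnorm_nonneg by (intro bdd_belowI[where m = 0]) auto
  have d: "0 \<le> d" "\<forall>q\<in>S. d \<le> cnorm (x - q)"
    unfolding d_def using ne bdd cnorm_nonneg by (auto intro: cInf_greatest cInf_lower)
  have "\<exists>s\<in>S. (cnorm (x - s))\<^sup>2 < d\<^sup>2 + 1 / (real n + 1)" for n :: nat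
  proof -
    have "Inf ((\<lambda>s. cnorm (x - s)) ` S) < sqrt (d\<^sup>2 + 1 / (real n + 1))"
      using d(1) real_sqrt_less_mono[of "d\<^sup>2" "d\<^sup>2 + 1 / (real n + 1)"] unfolding d_def by simp
    then obtain s where "s \<in> S" "cnorm (x - s) < sqrt (d\<^sup>2 + 1 / (real n + 1))"
      using cInf_less_iff[OF ne bdd] by auto
    moreover have "0 \<le> d\<^sup>2 + 1 / (real n + 1)" by simp
    ultimately show ?thesis
      using cnorm_nonneg[of "x - s"] power_strict_mono[of "cnorm (x - s)" _ 2] by fastforce
  qed
  then obtain s where s: "\<And>n. s n \<in> S" "\<And>n. (cnorm (x - s n))\<^sup>2 < d\<^sup>2 + 1 / (real n + 1)"
    by metis
  then obtain p where "p \<in> S" and "ctendsto s p"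
    using \<open>ccomplete S\<close> minimizing_sequence_ccauchy[OF S s(1) d s(2)] unfolding ccomplete_def
    by blast
  then show ?thesis
    using minimizing_sequence_limit[OF _ d(1) s(2)] d(2) by (meson order_trans)
qed

lemma exists_orthogonal_projection:
  assumes "csubspace S" and "ccomplete S"
  shows "\<exists>p\<in>S. \<forall>z\<in>S. cinner (x - p) z = 0"
  using exists_nearest_point[OF assms, of x] nearest_point_orthogonal[OF assms(1)] by blast

lemma cclosed_kernel:
  fixes \<phi> :: "'a::cinner_space \<Rightarrow> complex"
  assumes diff: "\<And>x y. \<phi> (x - y) = \<phi> x - \<phi> y"
    and bounded: "\<And>x. cmod (\<phi> x) \<le> K * cnorm x"
  shows "cclosed {x. \<phi> x = 0}"
  unfolding cclosed_def
proof (intro allI impI)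
  fix X L
  assume X: "\<forall>n. X n \<in> {x. \<phi> x = 0}" and lim: "ctendsto X L"
  have "\<phi> L = 0"
  proof (rule eq_zero_if_cmod_le_eps[where C = "max K 0"])
    fix e :: real
    assume "e > 0"
    then obtain M where M: "cnorm (X M - L) < e" using lim unfolding ctendsto_def by blast
    have "cmod (\<phi> L) = cmod (\<phi> (X M - L))" using X by (simp add: diff)
    also have "\<dots> \<le> K * cnorm (X M - L)" by (rule bounded)
    also have "\<dots> \<le> max K 0 * cnorm (X M - L)"
      using cnorm_nonneg by (intro mult_right_mono) auto
    also have "\<dots> \<le> max K 0 * e" using M by (intro mult_left_mono) auto
    finally show "cmod (\<phi> L) \<le> max K 0 * e" .
  qed
  then show "L \<in> {x. \<phi> x = 0}" by simp
qed

lemma riesz_representation: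
  fixes \<phi> :: "'a::chilbert \<Rightarrow> complex"
  assumes add: "\<And>x y. \<phi> (x + y) = \<phi> x + \<phi> y"
    and hom: "\<And>c x. \<phi> (scaleC c x) = c * \<phi> x"
    and bounded: "\<And>x. cmod (\<phi> x) \<le> K * cnorm x"
  shows "\<exists>z. \<forall>x. \<phi> x = cinner x z"
proof (cases "\<forall>x. \<phi> x = 0")
  case True
  then show ?thesis by (intro exI[of _ 0]) simp
next
  case False
  have diff: "\<phi> (x - y) = \<phi> x - \<phi> y" for x y using add[of "x - y" y] by simp
  have zero: "\<phi> 0 = 0" using diff[of 0 0] by simp
  define N where "N = {x. \<phi> x = 0}"
  have "csubspace N" unfolding csubspace_def N_def using add hom zero by simp
  have "cclosed N" unfolding N_def by (rule cclosed_kernel[OF diff bounded])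
  obtain x1 where x1: "\<phi> x1 \<noteq> 0" using False by blast
  obtain p where "p \<in> N" and orth: "\<forall>z\<in>N. cinner (x1 - p) z = 0"
    using exists_orthogonal_projection[OF \<open>csubspace N\<close> cclosed_imp_ccomplete[OF \<open>cclosed N\<close>]]
    by blast
  define e where "e = x1 - p"
  have \<phi>e: "\<phi> e \<noteq> 0" using \<open>p \<in> N\<close> x1 unfolding e_def N_def by (simp add: diff)
  then have "e \<noteq> 0" using zero by auto
  then have ee: "cinner e e \<noteq> 0" by (simp add: cinner_self_eq_zero_iff)
  have "\<phi> x = cinner x (scaleC (cnj (\<phi> e / cinner e e)) e)" for x
  proof -
    have "\<phi> (x - scaleC (\<phi> x / \<phi> e) e) = 0" using \<phi>e by (simp add: diff hom)
    then have "cinner e (x - scaleC (\<phi> x / \<phi> e) e) = 0"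
      using orth unfolding N_def e_def by blast
    then have "cinner (x - scaleC (\<phi> x / \<phi> e) e) e = 0"
      by (subst cinner_eq_zero_commute)
    then have "cinner x e = (\<phi> x / \<phi> e) * cinner e e"
      by (simp add: cinner_diff_left cinner_scaleC_left)
    moreover have "cinner x (scaleC (cnj (\<phi> e / cinner e e)) e) = \<phi> e / cinner e e * cinner x e"
      by (simp add: cinner_scaleC_right)
    ultimately show ?thesis using \<phi>e ee by simp
  qed
  then show ?thesis by blast
qed

lemma cbounded_linear_add: "cbounded_linear f \<Longrightarrow> f (x + y) = f x + f y"
  unfolding cbounded_linear_def by blast

lemma cbounded_linear_scaleC: "cbounded_linear f \<Longrightarrow> f (scaleC c x) = scaleC c (f x)"
  unfolding cbounded_linear_def by blast

lemma cbounded_linear_diff: "cbounded_linear f \<Longrightarrow> f (x - y) = f x - f y"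
  unfolding cbounded_linear_def by (metis add_diff_cancel diff_add_cancel)

lemma cinner_fun_adj:
  fixes f :: "'a::chilbert \<Rightarrow> 'b::chilbert"
  assumes f: "cbounded_linear f"
  shows "cinner (f x) y = cinner x (fun_adj f y)"
proof -
  obtain K where K: "\<And>x. cnorm (f x) \<le> K * cnorm x"
    using f unfolding cbounded_linear_def by blast
  have "\<exists>z. \<forall>x. cinner (f x) y = cinner x z"
  proof (rule riesz_representation[where K = "K * cnorm y"])
    show "cinner (f (x + x')) y = cinner (f x) y + cinner (f x') y" for x x'
      by (simp add: cbounded_linear_add[OF f] cinner_add_left)
    show "cinner (f (scaleC c x)) y = c * cinner (f x) y" for c x
      by (simp add: cbounded_linear_scaleC[OF f] cinner_scaleC_left)
    show "cmod (cinner (f x) y) \<le> K * cnorm y * cnorm x" for x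
    proof -
      have "cmod (cinner (f x) y) \<le> cnorm (f x) * cnorm y" by (rule Cauchy_Schwarz_cinner)
      also have "\<dots> \<le> K * cnorm x * cnorm y" using K cnorm_nonneg by (rule mult_right_mono)
      finally show ?thesis by (simp add: algebra_simps)
    qed
  qed
  then obtain z where z: "\<forall>x. cinner (f x) y = cinner x z" by blast
  have "fun_adj f y = z"
    unfolding fun_adj_def
  proof (rule the_equality)
    fix z'
    assume "\<forall>x. cinner (f x) y = cinner x z'"
    then have "cinner (z' - z) (z' - z) = 0"
      using z by (simp add: cinner_diff_right)
    then show "z' = z" by (simp add: cinner_self_eq_zero_iff)
  qed (rule z)
  then show ?thesis using z by simp
qed

section \<open>Operators given by their graphs\<close>

lemma lin_op_app_eq: "lin_op T \<Longrightarrow> (x, y) \<in> T \<Longrightarrow> app T x = y"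
  unfolding app_def lin_op_def by (rule the_equality) blast+

lemma lin_op_app_mem:
  assumes "lin_op T" and "x \<in> Domain T"
  shows "(x, app T x) \<in> T"
proof -
  obtain y where "(x, y) \<in> T" using assms(2) by blast
  with lin_op_app_eq[OF assms(1)] show ?thesis by simp
qed

lemma lin_op_mem_iff: "lin_op T \<Longrightarrow> (x, y) \<in> T \<longleftrightarrow> x \<in> Domain T \<and> app T x = y"
  using lin_op_app_eq lin_op_app_mem by blast

lemma app_subset:
  assumes "lin_op T" and "S \<subseteq> T" and "x \<in> Domain S"
  shows "app S x = app T x"
proof -
  obtain y where "(x, y) \<in> S" using assms(3) by blast
  moreover have "y' = y" if "(x, y') \<in> S" for y'
    using that \<open>(x, y) \<in> S\<close> assms(1,2) unfolding lin_op_def by blast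
  ultimately have "app S x = y" unfolding app_def by (rule the_equality)
  moreover have "app T x = y" using \<open>(x, y) \<in> S\<close> assms(1,2) lin_op_app_eq by blast
  ultimately show ?thesis by simp
qed

lemma lin_op_zero: "lin_op T \<Longrightarrow> (0, 0) \<in> T"
  unfolding lin_op_def by blast

lemma lin_op_add: "lin_op T \<Longrightarrow> (x, y) \<in> T \<Longrightarrow> (x', y') \<in> T \<Longrightarrow> (x + x', y + y') \<in> T"
  unfolding lin_op_def by blast

lemma lin_op_scaleC: "lin_op T \<Longrightarrow> (x, y) \<in> T \<Longrightarrow> (scaleC c x, scaleC c y) \<in> T"
  unfolding lin_op_def by blast

lemma lin_op_minus: "lin_op T \<Longrightarrow> (x, y) \<in> T \<Longrightarrow> (- x, - y) \<in> T"
  using lin_op_scaleC[of T x y "-1"] by (simp add: scaleC_minus_one)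

lemma lin_op_diff: "lin_op T \<Longrightarrow> (x, y) \<in> T \<Longrightarrow> (x', y') \<in> T \<Longrightarrow> (x - x', y - y') \<in> T"
  using lin_op_add[of T x y "- x'" "- y'"] lin_op_minus[of T x' y'] by simp

lemma lin_op_csubspace: "lin_op T \<Longrightarrow> csubspace T"
  unfolding csubspace_def zero_prod_def
  using lin_op_zero lin_op_add lin_op_scaleC by (metis prod.collapse plus_prod_def scaleC_prod_def)

lemma Domain_zero: "lin_op T \<Longrightarrow> 0 \<in> Domain T"
  using lin_op_zero by blast

lemma Domain_add: "lin_op T \<Longrightarrow> x \<in> Domain T \<Longrightarrow> x' \<in> Domain T \<Longrightarrow> x + x' \<in> Domain T"
  by (meson DomainI lin_op_app_mem lin_op_add)

lemma Domain_diff: "lin_op T \<Longrightarrow> x \<in> Domain T \<Longrightarrow> x' \<in> Domain T \<Longrightarrow> x - x' \<in> Domain T"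
  by (meson DomainI lin_op_app_mem lin_op_diff)

lemma Domain_scaleC: "lin_op T \<Longrightarrow> x \<in> Domain T \<Longrightarrow> scaleC c x \<in> Domain T"
  by (meson DomainI lin_op_app_mem lin_op_scaleC)

lemma Domain_minus: "lin_op T \<Longrightarrow> x \<in> Domain T \<Longrightarrow> - x \<in> Domain T"
  by (meson DomainI lin_op_app_mem lin_op_minus)

lemma app_add:
  "lin_op T \<Longrightarrow> x \<in> Domain T \<Longrightarrow> x' \<in> Domain T \<Longrightarrow> app T (x + x') = app T x + app T x'"
  by (meson lin_op_app_eq lin_op_app_mem lin_op_add)

lemma app_diff:
  "lin_op T \<Longrightarrow> x \<in> Domain T \<Longrightarrow> x' \<in> Domain T \<Longrightarrow> app T (x - x') = app T x - app T x'"
  by (meson lin_op_app_eq lin_op_app_mem lin_op_diff)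

lemma app_scaleC: "lin_op T \<Longrightarrow> x \<in> Domain T \<Longrightarrow> app T (scaleC c x) = scaleC c (app T x)"
  by (meson lin_op_app_eq lin_op_app_mem lin_op_scaleC)

lemma closed_opD:
  "closed_op T \<Longrightarrow> (\<And>n. (X n, Y n) \<in> T) \<Longrightarrow> ctendsto X x \<Longrightarrow> ctendsto Y y \<Longrightarrow> (x, y) \<in> T"
  unfolding closed_op_def by blast

lemma closed_op_cclosed:
  assumes "closed_op T"
  shows "cclosed T"
  unfolding cclosed_def
proof (intro allI impI)
  fix X L
  assume X: "\<forall>n. X n \<in> T" and lim: "ctendsto X L"
  have "(fst L, snd L) \<in> T"
    by (rule closed_opD[OF assms, of "\<lambda>n. fst (X n)" "\<lambda>n. snd (X n)"])
      (use X lim in \<open>simp_all add: ctendsto_fst ctendsto_snd\<close>)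
  then show "L \<in> T" by simp
qed

lemma neg_op_iff: "(x, y) \<in> neg_op T \<longleftrightarrow> (x, - y) \<in> T"
  unfolding neg_op_def by force

lemma cadj_iff: "(y, z) \<in> cadj T \<longleftrightarrow> (\<forall>x w. (x, w) \<in> T \<longrightarrow> cinner w y = cinner x z)"
  unfolding cadj_def by auto

lemma lin_op_cadj:
  assumes "cdense (Domain T)"
  shows "lin_op (cadj T)"
  unfolding lin_op_def
proof (intro conjI allI impI)
  show "(0, 0) \<in> cadj T" unfolding cadj_iff by simp
  fix x y x' y'
  assume "(x, y) \<in> cadj T" "(x', y') \<in> cadj T"
  then show "(x + x', y + y') \<in> cadj T" unfolding cadj_iff by (auto simp: cinner_add_right)
next
  fix c x y
  assume "(x, y) \<in> cadj T"
  then show "(scaleC c x, scaleC c y) \<in> cadj T" unfolding cadj_iff by (auto simp: cinner_scaleC_right)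
next
  fix x y y'
  assume "(x, y) \<in> cadj T" "(x, y') \<in> cadj T"
  then have "\<forall>u\<in>Domain T. cinner u (y - y') = 0" unfolding cadj_iff by (force simp: cinner_diff_right)
  then show "y = y'" using dense_orthogonal_eq_zero[OF assms] by (metis eq_iff_diff_eq_0)
qed

lemma closed_op_cadj: "closed_op (cadj T)"
  unfolding closed_op_def
proof (intro allI impI)
  fix Y Z y z
  assume YZ: "\<forall>n. (Y n, Z n) \<in> cadj T" and Y: "ctendsto Y y" and Z: "ctendsto Z z"
  show "(y, z) \<in> cadj T" unfolding cadj_iff
  proof (intro allI impI)
    fix x w
    assume "(x, w) \<in> T"
    have "cinner w y - cinner x z = 0"
    proof (rule eq_zero_if_cmod_le_eps[where C = "cnorm w + cnorm x"])
      fix e :: real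
      assume "e > 0"
      then obtain N1 N2 where
        N1: "\<forall>n\<ge>N1. cmod (cinner w (Y n) - cinner w y) \<le> cnorm w * e" and
        N2: "\<forall>n\<ge>N2. cmod (cinner x (Z n) - cinner x z) \<le> cnorm x * e"
        using cinner_ctendsto_right[OF Y] cinner_ctendsto_right[OF Z] by meson
      define n where "n = max N1 N2"
      have "cinner w (Y n) = cinner x (Z n)" using YZ \<open>(x, w) \<in> T\<close> unfolding cadj_iff by blast
      then have "cinner w y - cinner x z
          = (cinner x (Z n) - cinner x z) - (cinner w (Y n) - cinner w y)"
        by simp
      then have "cmod (cinner w y - cinner x z)
          \<le> cmod (cinner x (Z n) - cinner x z) + cmod (cinner w (Y n) - cinner w y)"
        by (metis norm_triangle_ineq4)
      also have "\<dots> \<le> cnorm x * e + cnorm w * e" using N1 N2 unfolding n_def by (intro add_mono) auto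
      finally show "cmod (cinner w y - cinner x z) \<le> (cnorm w + cnorm x) * e"
        by (simp add: algebra_simps)
    qed
    then show "cinner w y = cinner x z" by simp
  qed
qed

lemma lin_op_neg_op:
  assumes T: "lin_op T"
  shows "lin_op (neg_op T)"
  unfolding lin_op_def neg_op_iff
proof (intro conjI allI impI)
  show "(0, - 0) \<in> T" using lin_op_zero[OF T] by simp
  fix x y x' y'
  assume "(x, - y) \<in> T" "(x', - y') \<in> T"
  then show "(x + x', - (y + y')) \<in> T" using lin_op_add[OF T] by (metis minus_add_distrib)
next
  fix c x y
  assume "(x, - y) \<in> T"
  then show "(scaleC c x, - scaleC c y) \<in> T"
    using lin_op_scaleC[OF T] by (metis scaleC_minus_right)
next
  fix x y y'
  assume "(x, - y) \<in> T" "(x, - y') \<in> T"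
  then show "y = y'" using lin_op_app_eq[OF T] by (metis minus_equation_iff)
qed

lemma closed_op_neg_op:
  assumes "closed_op T"
  shows "closed_op (neg_op T)"
  unfolding closed_op_def neg_op_iff
proof (intro allI impI)
  fix X Y x y
  assume "\<forall>n. (X n, - Y n) \<in> T" and "ctendsto X x" and "ctendsto Y y"
  moreover have "ctendsto (\<lambda>n. - Y n) (- y)"
    using \<open>ctendsto Y y\<close> unfolding ctendsto_def by (metis cnorm_minus minus_diff_eq minus_diff_minus)
  ultimately show "(x, - y) \<in> T" using closed_opD[OF assms, of X "\<lambda>n. - Y n"] by blast
qed

lemma cadj_cadj_subset:
  fixes T :: "('a::chilbert \<times> 'b::chilbert) set"
  assumes T: "lin_op T" "closed_op T"
  shows "cadj (cadj T) \<subseteq> T"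
proof (clarify)
  fix x y
  assume xy: "(x, y) \<in> cadj (cadj T)"
  obtain p where "p \<in> T" and orth: "\<forall>z\<in>T. cinner ((x, y) - p) z = 0"
    using exists_orthogonal_projection[OF lin_op_csubspace[OF T(1)]
        cclosed_imp_ccomplete[OF closed_op_cclosed[OF T(2)]]] by blast
  define r1 r2 where "r1 = x - fst p" and "r2 = y - snd p"
  have orth': "cinner r1 u + cinner r2 v = 0" if "(u, v) \<in> T" for u v
    using orth that unfolding r1_def r2_def by (metis cinner_Pair prod.collapse minus_prod_def fst_conv snd_conv)
  have "(r2, - r1) \<in> cadj T"
    unfolding cadj_iff
  proof (intro allI impI)
    fix u v
    assume "(u, v) \<in> T"
    then have "cinner r2 v = - cinner r1 u" using orth' by (simp add: eq_neg_iff_add_eq_0 add.commute)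
    then have "cinner v r2 = cnj (- cinner r1 u)" by (metis cinner_commute)
    then show "cinner v r2 = cinner u (- r1)" by (simp add: cinner_minus_right cinner_commute[of r1 u])
  qed
  then have "cinner (- r1) x = cinner r2 y" and "cinner (snd p) r2 = cinner (fst p) (- r1)"
    using xy \<open>p \<in> T\<close> unfolding cadj_iff by (blast, metis prod.collapse)
  moreover from this(2) have "cinner (- r1) (fst p) = cinner r2 (snd p)" by (metis cinner_commute)
  ultimately have "cinner (- r1) r1 = cinner r2 r2"
    unfolding r1_def r2_def by (simp add: cinner_diff_right)
  then have "- cinner r1 r1 = cinner r2 r2" by (simp add: cinner_minus_left)
  then have "- Re (cinner r1 r1) = Re (cinner r2 r2)" by (metis uminus_complex.sel(1))
  then have "Re (cinner r1 r1) = 0" "Re (cinner r2 r2) = 0"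
    using cinner_nonneg[of r1] cinner_nonneg[of r2] by linarith+
  then have "r1 = 0" "r2 = 0" using Re_cinner_self_eq_zero by blast+
  then have "(x, y) = p" unfolding r1_def r2_def by (simp add: prod_eq_iff)
  then show "(x, y) \<in> T" using \<open>p \<in> T\<close> by simp
qed

lemma cadj_cadj:
  fixes T :: "('a::chilbert \<times> 'b::chilbert) set"
  assumes "lin_op T" "closed_op T"
  shows "cadj (cadj T) = T"
proof
  show "T \<subseteq> cadj (cadj T)"
  proof (clarsimp simp: cadj_iff)
    fix x y p q
    assume "(x, y) \<in> T" and "\<forall>x' w. (x', w) \<in> T \<longrightarrow> cinner w p = cinner x' q"
    then have "cinner y p = cinner x q" by blast
    then show "cinner q x = cinner p y" by (metis cinner_commute)
  qed
qed (rule cadj_cadj_subset[OF assms])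

lemma neg_cadj_subset_swap:
  fixes G :: "('a::chilbert \<times> 'b::chilbert) set"
  assumes "lin_op G" "closed_op G" and "neg_op (cadj G) \<subseteq> D"
  shows "neg_op (cadj D) \<subseteq> G"
proof
  fix vg
  assume "vg \<in> neg_op (cadj D)"
  then obtain v g where vg: "vg = (v, g)" and "(v, - g) \<in> cadj D"
    by (metis neg_op_iff prod.collapse)
  have "(v, g) \<in> cadj (cadj G)"
  proof (subst cadj_iff, intro allI impI)
    fix p q
    assume "(p, q) \<in> cadj G"
    then have "(p, - q) \<in> D" using assms(3) neg_op_iff[of p "- q" "cadj G"] by auto
    then have "cinner (- q) v = cinner p (- g)" using \<open>(v, - g) \<in> cadj D\<close> unfolding cadj_iff by blast
    then show "cinner q v = cinner p g" by (simp add: cinner_minus_left cinner_minus_right)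
  qed
  then show "vg \<in> G" using cadj_cadj[OF assms(1,2)] vg by simp
qed

section \<open>The graph inner product\<close>

lemma gip_eq_cinner_graph: "gip T u v = cinner (u, app T u) (v, app T v)"
  unfolding gip_def by simp

lemma gip_commute: "gip T u v = cnj (gip T v u)"
  unfolding gip_def by (metis cinner_commute complex_cnj_add)

lemma gip_eq_zero_commute: "gip T u v = 0 \<longleftrightarrow> gip T v u = 0"
  by (metis gip_commute complex_cnj_zero_iff)

lemma gip_add_left:
  "lin_op T \<Longrightarrow> x \<in> Domain T \<Longrightarrow> y \<in> Domain T \<Longrightarrow> gip T (x + y) v = gip T x v + gip T y v"
  unfolding gip_def by (simp add: app_add cinner_add_left)

lemma gip_diff_left:
  "lin_op T \<Longrightarrow> x \<in> Domain T \<Longrightarrow> y \<in> Domain T \<Longrightarrow> gip T (x - y) v = gip T x v - gip T y v"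
  unfolding gip_def by (simp add: app_diff cinner_diff_left)

lemma gip_scaleC_left: "lin_op T \<Longrightarrow> x \<in> Domain T \<Longrightarrow> gip T (scaleC c x) v = c * gip T x v"
  unfolding gip_def by (simp add: app_scaleC cinner_scaleC_left algebra_simps)

lemma gip_diff_right:
  "lin_op T \<Longrightarrow> x \<in> Domain T \<Longrightarrow> y \<in> Domain T \<Longrightarrow> gip T v (x - y) = gip T v x - gip T v y"
  by (metis gip_commute gip_diff_left complex_cnj_diff)

lemma gip_self_eq_zero: "gip T u u = 0 \<Longrightarrow> u = 0"
  unfolding gip_eq_cinner_graph by (metis cinner_self_eq_zero_iff prod.inject zero_prod_def)

lemma eq_if_gip_eq:
  assumes "lin_op T" and "t \<in> Domain T" "t' \<in> Domain T"
    and "\<forall>v\<in>Domain T. gip T t v = gip T t' v"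
  shows "t = t'"
proof -
  have "gip T (t - t') (t - t') = 0"
    using assms Domain_diff[OF assms(1-3)] by (simp add: gip_diff_left)
  then show ?thesis using gip_self_eq_zero by fastforce
qed

lemma exists_gip_representative:
  fixes T :: "('a::chilbert \<times> 'b::chilbert) set"
  assumes "lin_op T" "closed_op T"
  shows "\<exists>r\<in>Domain T. \<forall>v\<in>Domain T. cinner f v + cinner g (app T v) = gip T r v"
proof -
  obtain p where "p \<in> T" and orth: "\<forall>z\<in>T. cinner ((f, g) - p) z = 0"
    using exists_orthogonal_projection[OF lin_op_csubspace[OF assms(1)]
        cclosed_imp_ccomplete[OF closed_op_cclosed[OF assms(2)]]] by blast
  then have p: "p = (fst p, app T (fst p))" "fst p \<in> Domain T"
    using lin_op_mem_iff[OF assms(1), of "fst p" "snd p"] by auto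
  have "cinner f v + cinner g (app T v) = gip T (fst p) v" if "v \<in> Domain T" for v
  proof -
    have "cinner ((f, g) - p) (v, app T v) = 0"
      using orth lin_op_app_mem[OF assms(1) that] by blast
    then show ?thesis
      using p(1) unfolding gip_eq_cinner_graph by (simp add: cinner_diff_left)
  qed
  then show ?thesis using p(2) by blast
qed

lemma csubspace_graph_restrict:
  assumes "lin_op T" and "csubspace S" and "S \<subseteq> Domain T"
  shows "csubspace ((\<lambda>s. (s, app T s)) ` S)"
  unfolding csubspace_def
proof (intro conjI ballI allI)
  have "app T 0 = 0" using lin_op_app_eq[OF assms(1) lin_op_zero[OF assms(1)]] .
  moreover have "0 \<in> S" using assms(2) unfolding csubspace_def by blast
  ultimately show "0 \<in> (\<lambda>s. (s, app T s)) ` S"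
    by (intro image_eqI[where x = 0]) (simp_all add: zero_prod_def)
next
  fix x y
  assume "x \<in> (\<lambda>s. (s, app T s)) ` S" and "y \<in> (\<lambda>s. (s, app T s)) ` S"
  then obtain s t where "s \<in> S" "t \<in> S" and xy: "x = (s, app T s)" "y = (t, app T t)" by blast
  moreover have "app T (s + t) = app T s + app T t"
    using app_add[OF assms(1)] \<open>s \<in> S\<close> \<open>t \<in> S\<close> assms(3) by blast
  ultimately have "x + y = (s + t, app T (s + t))" and "s + t \<in> S"
    using assms(2) unfolding csubspace_def by auto
  then show "x + y \<in> (\<lambda>s. (s, app T s)) ` S" by blast
next
  fix c x
  assume "x \<in> (\<lambda>s. (s, app T s)) ` S"
  then obtain s where "s \<in> S" and x: "x = (s, app T s)" by blast
  moreover have "app T (scaleC c s) = scaleC c (app T s)"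
    using app_scaleC[OF assms(1)] \<open>s \<in> S\<close> assms(3) by blast
  ultimately have "scaleC c x = (scaleC c s, app T (scaleC c s))" and "scaleC c s \<in> S"
    using assms(2) unfolding csubspace_def by auto
  then show "scaleC c x \<in> (\<lambda>s. (s, app T s)) ` S" by blast
qed

lemma gnorm_diff_eq_cnorm_graph:
  assumes "lin_op T" and "x \<in> Domain T" "y \<in> Domain T"
  shows "gnorm T (x - y) = cnorm ((x, app T x) - (y, app T y))"
  unfolding gnorm_def cnorm_def gip_eq_cinner_graph using app_diff[OF assms] by simp

lemma ccomplete_graph_restrict:
  fixes T :: "('a::chilbert \<times> 'b::chilbert) set"
  assumes T: "lin_op T" "closed_op T" and "S \<subseteq> Domain T" and "closed_in_dom T S"
  shows "ccomplete ((\<lambda>s. (s, app T s)) ` S)"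
  unfolding ccomplete_def
proof (intro allI impI)
  fix X
  assume X: "\<forall>n. X n \<in> (\<lambda>s. (s, app T s)) ` S" and "ccauchy X"
  have Xn: "fst (X n) \<in> S" "X n = (fst (X n), app T (fst (X n)))" for n
  proof -
    obtain s where "s \<in> S" "X n = (s, app T s)" using X by blast
    then show "fst (X n) \<in> S" "X n = (fst (X n), app T (fst (X n)))" by simp_all
  qed
  have "X n \<in> T" for n
    using lin_op_app_mem[OF T(1), of "fst (X n)"] Xn[of n] assms(3) by auto
  then obtain L where "L \<in> T" and lim: "ctendsto X L"
    using \<open>ccauchy X\<close> cclosed_imp_ccomplete[OF closed_op_cclosed[OF T(2)]]
    unfolding ccomplete_def by blast
  then have L: "L = (fst L, app T (fst L))" "fst L \<in> Domain T"
    using lin_op_mem_iff[OF T(1), of "fst L" "snd L"] by auto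
  have "gnorm T (fst (X n) - fst L) = cnorm (X n - L)" for n
    using gnorm_diff_eq_cnorm_graph[OF T(1), of "fst (X n)" "fst L"] Xn[of n] L assms(3)
    by (simp add: subset_iff)
  then have "\<forall>e>0. \<exists>N. \<forall>n\<ge>N. gnorm T (fst (X n) - fst L) < e"
    using lim unfolding ctendsto_def by simp
  then have "fst L \<in> S"
    using assms(4)[unfolded closed_in_dom_def, rule_format, of "\<lambda>n. fst (X n)" "fst L"] Xn(1) L(2)
    by blast
  then show "\<exists>L\<in>(\<lambda>s. (s, app T s)) ` S. ctendsto X L" using lim L(1) by blast
qed

lemma mem_if_orthogonal_to_orthogonal_complement:
  fixes T :: "('a::chilbert \<times> 'b::chilbert) set"
  assumes T: "lin_op T" "closed_op T"
    and S: "csubspace S" "S \<subseteq> Domain T" "closed_in_dom T S"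
    and "x \<in> Domain T"
    and orth: "\<forall>z\<in>Domain T. (\<forall>s\<in>S. gip T s z = 0) \<longrightarrow> gip T x z = 0"
  shows "x \<in> S"
proof -
  obtain p where "p \<in> (\<lambda>s. (s, app T s)) ` S"
    and p_orth: "\<forall>q\<in>(\<lambda>s. (s, app T s)) ` S. cinner ((x, app T x) - p) q = 0"
    using exists_orthogonal_projection[OF csubspace_graph_restrict[OF T(1) S(1,2)]
        ccomplete_graph_restrict[OF T S(2,3)]] by blast
  then obtain s where "s \<in> S" and p: "p = (s, app T s)" by blast
  then have "s \<in> Domain T" using S(2) by blast
  have "gip T (x - s) t = 0" if "t \<in> S" for t
    using p_orth that S(2) unfolding p gip_eq_cinner_graph
    by (auto simp: app_diff[OF T(1) \<open>x \<in> Domain T\<close> \<open>s \<in> Domain T\<close>])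
  then have "\<forall>t\<in>S. gip T t (x - s) = 0" using gip_eq_zero_commute by blast
  then have "gip T x (x - s) = 0" and "gip T s (x - s) = 0"
    using orth Domain_diff[OF T(1) \<open>x \<in> Domain T\<close> \<open>s \<in> Domain T\<close>] \<open>s \<in> S\<close> by blast+
  then have "gip T (x - s) (x - s) = 0"
    using gip_diff_left[OF T(1) \<open>x \<in> Domain T\<close> \<open>s \<in> Domain T\<close>] by simp
  then show ?thesis using gip_self_eq_zero \<open>s \<in> S\<close> by fastforce
qed

section \<open>Boundary data spaces\<close>

lemma BD_subset_Domain: "BD T T0 \<subseteq> Domain T"
  unfolding BD_def by auto

lemma orth_proj_eqI:
  assumes T: "lin_op T" and M: "M \<subseteq> Domain T" "\<And>p q. p \<in> M \<Longrightarrow> q \<in> M \<Longrightarrow> p - q \<in> M"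
    and "x \<in> Domain T" and "w \<in> M" and orth: "\<forall>z\<in>M. gip T (x - w) z = 0"
  shows "orth_proj (gip T) M x = w"
  unfolding orth_proj_def
proof (rule the_equality)
  show "w \<in> M \<and> (\<forall>z\<in>M. gip T (x - w) z = 0)" using assms by blast
  fix w'
  assume w': "w' \<in> M \<and> (\<forall>z\<in>M. gip T (x - w') z = 0)"
  then have "w' - w \<in> M" "w \<in> Domain T" "w' \<in> Domain T" using M \<open>w \<in> M\<close> by auto
  then have "gip T (w' - w) (w' - w) = gip T (x - w) (w' - w) - gip T (x - w') (w' - w)"
    using gip_diff_left[OF T Domain_diff[OF T \<open>x \<in> Domain T\<close>] Domain_diff[OF T \<open>x \<in> Domain T\<close>]]
    by (metis diff_diff_eq2 diff_add_cancel add_diff_cancel_left')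
  also have "\<dots> = 0" using orth w' \<open>w' - w \<in> M\<close> by simp
  finally show "w' = w" using gip_self_eq_zero[of T "w' - w"] by simp
qed

lemma orth_proj_BD_eqI:
  assumes T: "lin_op T" and "T0 \<subseteq> T"
    and "x \<in> Domain T" and "y \<in> Domain T0" and "x - y \<in> BD T T0"
  shows "orth_proj (gip T) (BD T T0) x = x - y"
proof (rule orth_proj_eqI[OF T BD_subset_Domain _ assms(3,5)])
  show "p - q \<in> BD T T0" if "p \<in> BD T T0" "q \<in> BD T T0" for p q
    using that unfolding BD_def by (auto simp: Domain_diff[OF T] gip_diff_left[OF T])
  show "\<forall>z\<in>BD T T0. gip T (x - (x - y)) z = 0"
  proof
    fix z
    assume "z \<in> BD T T0"
    then have "gip T z y = 0" using \<open>y \<in> Domain T0\<close> unfolding BD_def by blast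
    then show "gip T (x - (x - y)) z = 0" by (simp add: gip_eq_zero_commute[of T y z])
  qed
qed

lemma exists_BD_decomposition:
  fixes T T0 :: "('a::chilbert \<times> 'b::chilbert) set"
  assumes T: "lin_op T" and T0: "lin_op T0" "closed_op T0" "T0 \<subseteq> T"
    and x: "x \<in> Domain T"
  shows "\<exists>y\<in>Domain T0. x - y \<in> BD T T0"
proof -
  obtain r where r: "r \<in> Domain T0"
    and rep: "\<forall>v\<in>Domain T0. cinner x v + cinner (app T x) (app T0 v) = gip T0 r v"
    using exists_gip_representative[OF T0(1,2)] by blast
  have app0: "app T0 v = app T v" if "v \<in> Domain T0" for v
    using app_subset[OF T T0(3) that] .
  have "r \<in> Domain T" using r T0(3) by blast
  moreover have "gip T (x - r) v = 0" if "v \<in> Domain T0" for v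
  proof -
    have "gip T x v = gip T r v"
      using rep that r app0 unfolding gip_def by simp
    then show ?thesis using gip_diff_left[OF T x \<open>r \<in> Domain T\<close>] by simp
  qed
  ultimately have "x - r \<in> BD T T0" unfolding BD_def using Domain_diff[OF T x] by blast
  then show ?thesis using r by blast
qed

section \<open>The Dirichlet-to-Neumann setting\<close>

locale dtn_setting =
  fixes G :: "('a::chilbert \<times> 'b::chilbert) set"
    and D :: "('b \<times> 'a) set"
    and m :: "'a \<Rightarrow> 'a"
    and a :: "'b \<Rightarrow> 'b"
  assumes G_op: "densely_defined_closed G"
    and D_op: "densely_defined_closed D"
    and G_D: "neg_op (cadj G) \<subseteq> D"
    and m_bd: "cbounded_linear m"
    and a_bd: "cbounded_linear a"
begin

abbreviation G0 :: "('a \<times> 'b) set" where "G0 \<equiv> Gring D"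

abbreviation D0 :: "('b \<times> 'a) set" where "D0 \<equiv> Dring G"

definition form :: "'a \<Rightarrow> 'a \<Rightarrow> complex" where
  "form u v = cinner (a (app G u)) (app G v) + cinner (m u) v"

lemma lin_op_G: "lin_op G" and closed_op_G: "closed_op G"
  and lin_op_D: "lin_op D" and closed_op_D: "closed_op D"
  using G_op D_op unfolding densely_defined_closed_def by auto

lemma lin_op_G0: "lin_op G0" and closed_op_G0: "closed_op G0"
  unfolding Gring_def
  using lin_op_neg_op lin_op_cadj closed_op_neg_op closed_op_cadj D_op
  unfolding densely_defined_closed_def by auto

lemma lin_op_D0: "lin_op D0" and closed_op_D0: "closed_op D0"
  unfolding Dring_def
  using lin_op_neg_op lin_op_cadj closed_op_neg_op closed_op_cadj G_op
  unfolding densely_defined_closed_def by auto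

lemma G0_subset_G: "G0 \<subseteq> G"
  unfolding Gring_def by (rule neg_cadj_subset_swap[OF lin_op_G closed_op_G G_D])

lemma D0_subset_D: "D0 \<subseteq> D"
  unfolding Dring_def by (rule G_D)

lemma Domain_G0_subset: "Domain G0 \<subseteq> Domain G"
  using G0_subset_G by blast

lemma app_G0: "v \<in> Domain G0 \<Longrightarrow> app G0 v = app G v"
  using app_subset[OF lin_op_G G0_subset_G] .

lemma app_D0: "y \<in> Domain D0 \<Longrightarrow> app D0 y = app D y"
  using app_subset[OF lin_op_D D0_subset_D] .

text \<open>As \<open>D\<close> is closed, \<open>D = D\<^sup>*\<^sup>* = (-G0)\<^sup>*\<close>.\<close>

lemma mem_D_iff: "(x, y) \<in> D \<longleftrightarrow> (\<forall>v\<in>Domain G0. cinner y v = - cinner x (app G0 v))"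
proof -
  have "(p, q) \<in> cadj D \<longleftrightarrow> p \<in> Domain G0 \<and> q = - app G0 p" for p q
    using lin_op_mem_iff[OF lin_op_G0, of p "- q"] unfolding Gring_def neg_op_iff by auto
  then have "(x, y) \<in> cadj (cadj D) \<longleftrightarrow> (\<forall>v\<in>Domain G0. cinner (- app G0 v) x = cinner v y)"
    unfolding cadj_iff[of x y "cadj D"] by auto
  also have "\<dots> \<longleftrightarrow> (\<forall>v\<in>Domain G0. cinner y v = - cinner x (app G0 v))"
  proof -
    have "cinner (- g) x = cinner v y \<longleftrightarrow> cinner y v = - cinner x g" for g v
    proof -
      have "cinner (- g) x = cnj (- cinner x g)"
        by (simp add: cinner_minus_left cinner_commute[of g x])
      moreover have "cinner v y = cnj (cinner y v)" by (rule cinner_commute)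
      ultimately show ?thesis by (metis complex_cnj_cancel_iff)
    qed
    then show ?thesis by simp
  qed
  finally show ?thesis using cadj_cadj[OF lin_op_D closed_op_D] by simp
qed

lemma weak_solution_iff: "(a (app G u), m u) \<in> D \<longleftrightarrow> (\<forall>v\<in>Domain G0. form u v = 0)"
  unfolding mem_D_iff form_def
  by (auto simp: app_G0 eq_neg_iff_add_eq_0 add.commute)

lemma mem_ker_mDaG_iff:
  "v \<in> ker_mDaG G D a m \<longleftrightarrow> v \<in> Domain G0 \<and> (\<forall>w\<in>Domain G0. form w v = 0)"
proof -
  have "cinner (fun_adj m v) w = - cinner (fun_adj a (app G0 v)) (app G0 w) \<longleftrightarrow> form w v = 0"
    if "v \<in> Domain G0" "w \<in> Domain G0" for w
  proof -
    have "cinner (fun_adj m v) w = cnj (cinner (m w) v)"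
      using cinner_commute[of "fun_adj m v" w] cinner_fun_adj[OF m_bd, of w v] by simp
    moreover have "cinner (fun_adj a (app G0 v)) (app G0 w) = cnj (cinner (a (app G w)) (app G v))"
      using cinner_commute[of "fun_adj a (app G0 v)" "app G0 w"]
        cinner_fun_adj[OF a_bd, of "app G0 w" "app G0 v"] that by (simp add: app_G0)
    ultimately show ?thesis
      unfolding form_def
      by (metis add.commute complex_cnj_cancel_iff complex_cnj_minus eq_neg_iff_add_eq_0)
  qed
  moreover have "v \<in> ker_mDaG G D a m
      \<longleftrightarrow> v \<in> Domain G0 \<and> (fun_adj a (app G0 v), fun_adj m v) \<in> D"
    unfolding ker_mDaG_def by (auto simp: lin_op_mem_iff[OF lin_op_D])
  ultimately show ?thesis unfolding mem_D_iff by auto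
qed

lemma D_inverts_G_on_BD:
  assumes "u0 \<in> BD G G0"
  shows "(app G u0, u0) \<in> D"
  unfolding mem_D_iff
proof
  fix v
  assume "v \<in> Domain G0"
  then have "cinner u0 v + cinner (app G u0) (app G0 v) = 0"
    using assms app_G0 unfolding BD_def gip_def by auto
  then show "cinner u0 v = - cinner (app G u0) (app G0 v)"
    by (simp add: eq_neg_iff_add_eq_0)
qed

lemma app_G_mem_BD:
  assumes "u0 \<in> BD G G0"
  shows "app G u0 \<in> BD D D0"
  unfolding BD_def
proof (intro CollectI conjI ballI)
  show "app G u0 \<in> Domain D" using D_inverts_G_on_BD[OF assms] by blast
  fix y
  assume "y \<in> Domain D0"
  then have "(y, - app D0 y) \<in> cadj G"
    using lin_op_app_mem[OF lin_op_D0] unfolding Dring_def neg_op_iff by blast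
  moreover have "(u0, app G u0) \<in> G"
    using lin_op_app_mem[OF lin_op_G] assms BD_subset_Domain by blast
  ultimately have "cinner (app G u0) y = - cinner u0 (app D y)"
    using app_D0[OF \<open>y \<in> Domain D0\<close>] unfolding cadj_iff by (simp add: cinner_minus_right)
  moreover have "app D (app G u0) = u0" using lin_op_app_eq[OF lin_op_D D_inverts_G_on_BD[OF assms]] .
  ultimately show "gip D (app G u0) y = 0" unfolding gip_def by simp
qed

lemma gip_app_G_piBD_D_eq_form:
  assumes "u0 \<in> BD G G0" and "v \<in> ker_mDaG G D a m"
  shows "gip D (app G u0) (piBD_D G D (fun_adj a (app G v))) = form u0 v"
proof -
  define x where "x = fun_adj a (app G v)"
  have "v \<in> Domain G0" using assms(2) unfolding ker_mDaG_def by blast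
  then have x: "x \<in> Domain D" "app D x = fun_adj m v"
    using assms(2) app_G0[of v] unfolding ker_mDaG_def x_def by auto
  obtain y where "y \<in> Domain D0" and "x - y \<in> BD D D0"
    using exists_BD_decomposition[OF lin_op_D lin_op_D0 closed_op_D0 D0_subset_D x(1)] by blast
  then have "piBD_D G D x = x - y"
    unfolding piBD_D_def using orth_proj_BD_eqI[OF lin_op_D D0_subset_D x(1)] by blast
  moreover have "y \<in> Domain D" using \<open>y \<in> Domain D0\<close> D0_subset_D by blast
  moreover have "gip D (app G u0) y = 0"
    using app_G_mem_BD[OF assms(1)] \<open>y \<in> Domain D0\<close> unfolding BD_def by blast
  moreover have "gip D (app G u0) x = form u0 v"
    using lin_op_app_eq[OF lin_op_D D_inverts_G_on_BD[OF assms(1)]] x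
    unfolding gip_def form_def x_def by (simp add: cinner_fun_adj[OF a_bd] cinner_fun_adj[OF m_bd])
  ultimately show ?thesis
    unfolding x_def[symmetric] using gip_diff_right[OF lin_op_D x(1)] by simp
qed

lemma form_add_left:
  "u \<in> Domain G \<Longrightarrow> u' \<in> Domain G \<Longrightarrow> form (u + u') v = form u v + form u' v"
  unfolding form_def
  by (simp add: app_add[OF lin_op_G] cbounded_linear_add[OF a_bd] cbounded_linear_add[OF m_bd]
      cinner_add_left)

lemma form_diff_left:
  "u \<in> Domain G \<Longrightarrow> u' \<in> Domain G \<Longrightarrow> form (u - u') v = form u v - form u' v"
  unfolding form_def
  by (simp add: app_diff[OF lin_op_G] cbounded_linear_diff[OF a_bd] cbounded_linear_diff[OF m_bd]
      cinner_diff_left)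

lemma form_scaleC_left: "u \<in> Domain G \<Longrightarrow> form (scaleC c u) v = c * form u v"
  unfolding form_def
  by (simp add: app_scaleC[OF lin_op_G] cbounded_linear_scaleC[OF a_bd] cbounded_linear_scaleC[OF m_bd]
      cinner_scaleC_left algebra_simps)

lemma exists_form_representative:
  assumes "u \<in> Domain G"
  shows "\<exists>r\<in>Domain G0. \<forall>v\<in>Domain G0. form u v = gip G0 r v"
proof -
  obtain r where "r \<in> Domain G0"
    and "\<forall>v\<in>Domain G0. cinner (m u) v + cinner (a (app G u)) (app G0 v) = gip G0 r v"
    using exists_gip_representative[OF lin_op_G0 closed_op_G0] by blast
  then show ?thesis unfolding form_def by (auto simp: app_G0 add.commute)
qed

lemma Domain_DtN_imp:
  assumes "u0 \<in> Domain (DtN G D a m)"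
  shows "u0 \<in> BD G G0"
    and "\<forall>v\<in>ker_mDaG G D a m. gip D (app G u0) (piBD_D G D (fun_adj a (app G v))) = 0"
proof -
  obtain u where u0: "u0 = piBD_G G D u" and "u \<in> Domain G"
    and "a (app G u) \<in> Domain D" and "m u - app D (a (app G u)) = 0"
    using assms unfolding DtN_def by blast
  then have "(a (app G u), m u) \<in> D" using lin_op_mem_iff[OF lin_op_D] by simp
  obtain y where "y \<in> Domain G0" and "u - y \<in> BD G G0"
    using exists_BD_decomposition[OF lin_op_G lin_op_G0 closed_op_G0 G0_subset_G \<open>u \<in> Domain G\<close>]
    by blast
  moreover have "u0 = u - y"
    using orth_proj_BD_eqI[OF lin_op_G G0_subset_G \<open>u \<in> Domain G\<close> calculation] u0
    unfolding piBD_G_def by simp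
  ultimately show "u0 \<in> BD G G0" by simp
  show "\<forall>v\<in>ker_mDaG G D a m. gip D (app G u0) (piBD_D G D (fun_adj a (app G v))) = 0"
  proof
    fix v
    assume v: "v \<in> ker_mDaG G D a m"
    have "y \<in> Domain G" using \<open>y \<in> Domain G0\<close> Domain_G0_subset by blast
    then have "form u0 v = form u v - form y v"
      using \<open>u0 = u - y\<close> form_diff_left[OF \<open>u \<in> Domain G\<close>] by simp
    also have "\<dots> = 0"
      using \<open>(a (app G u), m u) \<in> D\<close> v \<open>y \<in> Domain G0\<close>
      unfolding weak_solution_iff mem_ker_mDaG_iff by simp
    finally show "gip D (app G u0) (piBD_D G D (fun_adj a (app G v))) = 0"
      using gip_app_G_piBD_D_eq_form[OF \<open>u0 \<in> BD G G0\<close> v] by simp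
  qed
qed

lemma Domain_DtN_if:
  assumes "u0 \<in> BD G G0" and "w \<in> Domain G0" and "\<forall>v\<in>Domain G0. form u0 v = form w v"
  shows "u0 \<in> Domain (DtN G D a m)"
proof -
  have "u0 \<in> Domain G" "w \<in> Domain G" using assms(1,2) BD_subset_Domain Domain_G0_subset by auto
  define u where "u = u0 - w"
  have "u \<in> Domain G" unfolding u_def using Domain_diff[OF lin_op_G] \<open>u0 \<in> Domain G\<close> \<open>w \<in> Domain G\<close> .
  have "\<forall>v\<in>Domain G0. form u v = 0"
    using assms(3) form_diff_left[OF \<open>u0 \<in> Domain G\<close> \<open>w \<in> Domain G\<close>] unfolding u_def by simp
  then have "(a (app G u), m u) \<in> D" unfolding weak_solution_iff .
  moreover have "piBD_G G D u = u0"
    using orth_proj_BD_eqI[OF lin_op_G G0_subset_G \<open>u \<in> Domain G\<close>, of "- w"]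
      Domain_minus[OF lin_op_G0 assms(2)] assms(1)
    unfolding piBD_G_def u_def by simp
  moreover have "a (app G u) \<in> Domain D" and "m u - app D (a (app G u)) = 0"
    using calculation(1) lin_op_mem_iff[OF lin_op_D] by auto
  ultimately have "(u0, piBD_D G D (a (app G u))) \<in> DtN G D a m"
    using \<open>u \<in> Domain G\<close> unfolding DtN_def by blast
  then show ?thesis by blast
qed

end

locale dtn_closed_range = dtn_setting +
  fixes T :: "'a \<Rightarrow> 'a"
  assumes T_maps: "\<And>u. u \<in> Domain G0 \<Longrightarrow> T u \<in> Domain G0"
    and gip_T: "\<And>u v. u \<in> Domain G0 \<Longrightarrow> v \<in> Domain G0 \<Longrightarrow> gip G0 (T u) v = form u v"
    and range_closed: "closed_in_dom G0 (T ` Domain G0)"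
begin

lemma T_add: "u \<in> Domain G0 \<Longrightarrow> u' \<in> Domain G0 \<Longrightarrow> T (u + u') = T u + T u'"
  by (intro eq_if_gip_eq[OF lin_op_G0])
    (auto simp: T_maps Domain_add[OF lin_op_G0] gip_add_left[OF lin_op_G0] gip_T
      form_add_left subsetD[OF Domain_G0_subset])

lemma T_scaleC: "u \<in> Domain G0 \<Longrightarrow> T (scaleC c u) = scaleC c (T u)"
  by (intro eq_if_gip_eq[OF lin_op_G0])
    (auto simp: T_maps Domain_scaleC[OF lin_op_G0] gip_scaleC_left[OF lin_op_G0] gip_T
      form_scaleC_left subsetD[OF Domain_G0_subset])

lemma csubspace_range_T: "csubspace (T ` Domain G0)"
  unfolding csubspace_def
proof (intro conjI ballI allI)
  have "T 0 = 0" using T_scaleC[of 0 0] Domain_zero[OF lin_op_G0] by simp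
  then show "0 \<in> T ` Domain G0" using Domain_zero[OF lin_op_G0] by force
next
  fix x y
  assume "x \<in> T ` Domain G0" "y \<in> T ` Domain G0"
  then obtain u u' where "u \<in> Domain G0" "u' \<in> Domain G0" "x = T u" "y = T u'" by blast
  then show "x + y \<in> T ` Domain G0"
    using T_add Domain_add[OF lin_op_G0] by (metis image_eqI)
next
  fix c x
  assume "x \<in> T ` Domain G0"
  then obtain u where "u \<in> Domain G0" "x = T u" by blast
  then show "scaleC c x \<in> T ` Domain G0"
    using T_scaleC Domain_scaleC[OF lin_op_G0] by (metis image_eqI)
qed

lemma orthogonal_range_T_iff:
  "z \<in> Domain G0 \<Longrightarrow> (\<forall>s\<in>T ` Domain G0. gip G0 s z = 0) \<longleftrightarrow> z \<in> ker_mDaG G D a m"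
  using gip_T mem_ker_mDaG_iff by auto

lemma exists_form_preimage:
  assumes "u0 \<in> Domain G" and "\<forall>v\<in>ker_mDaG G D a m. form u0 v = 0"
  shows "\<exists>w\<in>Domain G0. \<forall>v\<in>Domain G0. form u0 v = form w v"
proof -
  obtain r where "r \<in> Domain G0" and r: "\<forall>v\<in>Domain G0. form u0 v = gip G0 r v"
    using exists_form_representative[OF assms(1)] by blast
  have "r \<in> T ` Domain G0"
  proof (rule mem_if_orthogonal_to_orthogonal_complement
      [OF lin_op_G0 closed_op_G0 csubspace_range_T _ range_closed \<open>r \<in> Domain G0\<close>])
    show "T ` Domain G0 \<subseteq> Domain G0" using T_maps by blast
    show "\<forall>z\<in>Domain G0. (\<forall>s\<in>T ` Domain G0. gip G0 s z = 0) \<longrightarrow> gip G0 r z = 0"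
    proof (intro ballI impI)
      fix z
      assume "z \<in> Domain G0" and "\<forall>s\<in>T ` Domain G0. gip G0 s z = 0"
      then have "z \<in> ker_mDaG G D a m" using orthogonal_range_T_iff by blast
      then have "form u0 z = 0" using assms(2) by blast
      then show "gip G0 r z = 0" using r \<open>z \<in> Domain G0\<close> by simp
    qed
  qed
  then obtain w where "w \<in> Domain G0" and "r = T w" by blast
  then show ?thesis using r gip_T by auto
qed

end

theorem proposition5p3:
  fixes G :: "('a::chilbert \<times> 'b::chilbert) set"
    and D :: "('b \<times> 'a) set"
    and m :: "'a \<Rightarrow> 'a"
    and a :: "'b \<Rightarrow> 'b"
    and T :: "'a \<Rightarrow> 'a"
  assumes G_op: "densely_defined_closed G"
    and D_op: "densely_defined_closed D"
    and G_D: "neg_op (cadj G) \<subseteq> D"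
    and m_bd: "cbounded_linear m"
    and a_bd: "cbounded_linear a"
    and a_coercive: "coercive a"
    and T_maps: "\<forall>u \<in> Domain (Gring D). T u \<in> Domain (Gring D)"
    and T_bd: "\<exists>K. \<forall>u \<in> Domain (Gring D). gnorm (Gring D) (T u) \<le> K * gnorm (Gring D) u"
    and T_def: "\<forall>u \<in> Domain (Gring D). \<forall>v \<in> Domain (Gring D).
                  gip (Gring D) (T u) v = cinner (a (app G u)) (app G v) + cinner (m u) v"
    and T_ran_closed: "closed_in_dom (Gring D) (T ` Domain (Gring D))"
  shows "Domain (DtN G D a m) =
    {u0 \<in> BD G (Gring D). \<forall>v \<in> ker_mDaG G D a m.
        gip D (app G u0) (piBD_D G D (fun_adj a (app G v))) = 0}"
proof -
  interpret dtn_setting G D m a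
    using G_op D_op G_D m_bd a_bd by unfold_locales
  interpret dtn_closed_range G D m a T
    using T_maps T_def T_ran_closed by unfold_locales (auto simp: form_def)
  show ?thesis
  proof (intro set_eqI iffI)
    fix u0
    assume "u0 \<in> Domain (DtN G D a m)"
    then show "u0 \<in> {u0 \<in> BD G G0. \<forall>v \<in> ker_mDaG G D a m.
        gip D (app G u0) (piBD_D G D (fun_adj a (app G v))) = 0}"
      using Domain_DtN_imp by blast
  next
    fix u0
    assume "u0 \<in> {u0 \<in> BD G G0. \<forall>v \<in> ker_mDaG G D a m.
        gip D (app G u0) (piBD_D G D (fun_adj a (app G v))) = 0}"
    then have "u0 \<in> BD G G0" and "\<forall>v\<in>ker_mDaG G D a m. form u0 v = 0"
      using gip_app_G_piBD_D_eq_form by auto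
    then show "u0 \<in> Domain (DtN G D a m)"
      using exists_form_preimage Domain_DtN_if BD_subset_Domain by blast
  qed
qed

end
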